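(* In the standing setting below, let $\mathcal{O}$ be the set of popular sets. Then $\mathcal{F}:=\mathcal{C}(M)\cup\mathcal{O}$ satisfies the strong circuit elimination axiom: for every $F_0,F_1\in\mathcal{F}$, $e\in F_0\cap F_1$ and $f\in F_0\triangle F_1$ there is $G\in\mathcal{F}$ with $f\in G\subseteq(F_0\cup F_1)\setminus\{e\}$.
   Context: Standing setting: $M,N$ are finitary matroids on a common ground set $E$; $\mathcal{C}(M)$ is the set of circuits of $M$; $I\in\mathcal{I}(M)\cap\mathcal{I}(N)$ is maximal among common independent sets; $\kappa:=r(N/I)$ is an uncountable regular cardinal and $r(M/I)<\kappa$. Fix a base $J_M$ of $M/I$ and a base $J_N$ of $N/I$, put $B_M:=I\cup J_M$, $B_N:=I\cup J_N$, $b:=(B_M,B_N)$. For a base $B$ of a matroid $M$, $D_M(B)$ is the digraph on $E$ with arc $ef$ iff $e\notin B$ and $f\in C_M(e,B)\setminus\{e\}$ ($C_M(e,B)$ the fundamental circuit); $D(b):=D_M(B_M)\cup D_N^{-1}(B_N)$ where $D^{-1}$ reverses all arcs. A $b$-path is a finite directed path $P$ in $D(b)$ whose initial vertex lies in $B_N\setminus B_M$; $\mathsf{ter}(P)$ is its terminal vertex and $\mathsf{ter}(\mathcal{P})=\{\mathsf{ter}(P):P\in\mathcal{P}\}$. A $b$-path-system is a set of $\kappa$ pairwise disjoint $b$-paths. A $\Delta$-system is a family of sets any two of which intersect in the same set $K$ (the kernel); its petals are $C\setminus K$. A nonempty $K\subseteq E$ is popular if there exist a $b$-path-system $\mathcal{P}$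 and a $\Delta$-system $\mathcal{D}$ of $\kappa$ many circuits of $M$ with kernel $K$ such that every petal of $\mathcal{D}$ is contained in $I\cup\mathsf{ter}(\mathcal{P})$. *)

theory Defs
  imports Main
begin

unbundle cardinal_syntax

definition maximal_in :: "'a set set \<Rightarrow> 'a set \<Rightarrow> bool" where
  "maximal_in \<I> B \<longleftrightarrow> B \<in> \<I> \<and> (\<forall>B'\<in>\<I>. B \<subseteq> B' \<longrightarrow> B' = B)"

text \<open>Infinite matroid axioms (I1)-(I3), (IM) of Bruhn et al., plus finitarity.\<close>
definition finitary_matroid :: "'a set \<Rightarrow> 'a set set \<Rightarrow> bool" where
  "finitary_matroid E \<I> \<longleftrightarrow>
     (\<forall>I\<in>\<I>. I \<subseteq> E) \<and>
     {} \<in> \<I> \<and>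
     (\<forall>I\<in>\<I>. \<forall>J. J \<subseteq> I \<longrightarrow> J \<in> \<I>) \<and>
     (\<forall>I B. I \<in> \<I> \<and> \<not> maximal_in \<I> I \<and> maximal_in \<I> B \<longrightarrow>
            (\<exists>x\<in>B - I. insert x I \<in> \<I>)) \<and>
     (\<forall>I X. I \<in> \<I> \<and> I \<subseteq> X \<and> X \<subseteq> E \<longrightarrow>
            (\<exists>J. maximal_in {J'. J' \<in> \<I> \<and> I \<subseteq> J' \<and> J' \<subseteq> X} J)) \<and>
     (\<forall>X. X \<subseteq> E \<and> (\<forall>F. F \<subseteq> X \<and> finite F \<longrightarrow> F \<in> \<I>) \<longrightarrow> X \<in> \<I>)"

definition circuits :: "'a set \<Rightarrow> 'a set set \<Rightarrow> 'a set set" where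
  "circuits E \<I> = {C. C \<subseteq> E \<and> C \<notin> \<I> \<and> (\<forall>D. D \<subset> C \<longrightarrow> D \<in> \<I>)}"

text \<open>Independent sets of the contraction \<open>M/I\<close> (for \<open>I\<close> independent in \<open>M\<close>);
  its ground set is \<open>E - I\<close>.\<close>
definition contract :: "'a set set \<Rightarrow> 'a set \<Rightarrow> 'a set set" where
  "contract \<I> I = {J. J \<inter> I = {} \<and> J \<union> I \<in> \<I>}"

definition mrank :: "'a set set \<Rightarrow> 'a rel" where
  "mrank \<I> = |SOME B. maximal_in \<I> B|"

definition fcirc :: "'a set \<Rightarrow> 'a set set \<Rightarrow> 'a \<Rightarrow> 'a set \<Rightarrow> 'a set" where
  "fcirc E \<I> e B = (THE C. C \<in> circuits E \<I> \<and> C \<subseteq> insert e B)"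

definition exch_digraph :: "'a set \<Rightarrow> 'a set set \<Rightarrow> 'a set \<Rightarrow> 'a rel" where
  "exch_digraph E \<I> B = {(e, f). e \<in> E \<and> e \<notin> B \<and> f \<in> fcirc E \<I> e B - {e}}"

definition Db :: "'a set \<Rightarrow> 'a set set \<Rightarrow> 'a set set \<Rightarrow> 'a set \<Rightarrow> 'a set \<Rightarrow> 'a rel" where
  "Db E \<I>M \<I>N BM BN = exch_digraph E \<I>M BM \<union> (exch_digraph E \<I>N BN)\<inverse>"

definition dpath :: "'a rel \<Rightarrow> 'a list \<Rightarrow> bool" where
  "dpath R P \<longleftrightarrow> P \<noteq> [] \<and> distinct P \<and> successively (\<lambda>x y. (x, y) \<in> R) P"

definition b_path :: "'a set \<Rightarrow> 'a set set \<Rightarrow> 'a set set \<Rightarrow> 'a set \<Rightarrow> 'a set \<Rightarrow> 'a list \<Rightarrow> bool" where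
  "b_path E \<I>M \<I>N BM BN P \<longleftrightarrow> dpath (Db E \<I>M \<I>N BM BN) P \<and> hd P \<in> BN - BM"

definition ter :: "'a list \<Rightarrow> 'a" where
  "ter P = last P"

definition b_path_system ::
  "'a set \<Rightarrow> 'a set set \<Rightarrow> 'a set set \<Rightarrow> 'a set \<Rightarrow> 'a set \<Rightarrow> 'k rel \<Rightarrow> 'a list set \<Rightarrow> bool" where
  "b_path_system E \<I>M \<I>N BM BN \<kappa> \<P> \<longleftrightarrow>
     (\<forall>P\<in>\<P>. b_path E \<I>M \<I>N BM BN P) \<and>
     (\<forall>P\<in>\<P>. \<forall>Q\<in>\<P>. P \<noteq> Q \<longrightarrow> set P \<inter> set Q = {}) \<and>
     |\<P>| =o \<kappa>"

definition delta_system :: "'a set set \<Rightarrow> 'a set \<Rightarrow> bool" where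
  "delta_system \<D> K \<longleftrightarrow> (\<forall>C\<in>\<D>. \<forall>D\<in>\<D>. C \<noteq> D \<longrightarrow> C \<inter> D = K)"

definition popular ::
  "'a set \<Rightarrow> 'a set set \<Rightarrow> 'a set set \<Rightarrow> 'a set \<Rightarrow> 'a set \<Rightarrow> 'a set \<Rightarrow> 'k rel \<Rightarrow> 'a set \<Rightarrow> bool" where
  "popular E \<I>M \<I>N I BM BN \<kappa> K \<longleftrightarrow>
     K \<noteq> {} \<and> K \<subseteq> E \<and>
     (\<exists>\<P> \<D>. b_path_system E \<I>M \<I>N BM BN \<kappa> \<P> \<and>
            \<D> \<subseteq> circuits E \<I>M \<and> |\<D>| =o \<kappa> \<and> delta_system \<D> K \<and>
            (\<forall>C\<in>\<D>. C - K \<subseteq> I \<union> ter ` \<P>))"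

end

theory Submission
  imports Defs
begin

(* Circuits of a finitary matroid satisfy strong circuit elimination; this settles the case of
   two circuits. A popular set K is the kernel of a Delta-system of kappa circuits whose petals are
   covered by I and the termini of a b-path-system; K is finite, so only finitely many petals meet
   a given finite set. Eliminating e between the circuits of such a family and the other set (a
   circuit, or the circuits of a second such family) gives kappa circuits through f inside
   Z \<union> W x, where Z is the union of the two given sets and the sets W x of petals are pairwise
   disjoint and disjoint from Z. If one of these circuits misses its W x, it is the required
   circuit; otherwise kappa of them have the same trace T on Z, and T is popular. For two popular
   sets the two path systems have to be merged: a Zorn argument selects kappa pairs of circuits
   whose regions, the petals together with the paths ending in them, are pairwise disjoint. *)

section \<open>Counting below an infinite cardinal\<close>

lemma finite_ordLess_infinite: "finite A \<Longrightarrow> infinite K \<Longrightarrow> |A| <o |K|"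
  using finite_iff_ordLess_natLeq[of A] infinite_iff_natLeq_ordLeq[of K] ordLess_ordLeq_trans by blast

lemma finite_if_subsingleton: "(\<And>a b. a \<in> A \<Longrightarrow> b \<in> A \<Longrightarrow> a = b) \<Longrightarrow> finite A"
proof (cases "A = {}")
  case False
  then obtain a where "a \<in> A" by blast
  moreover assume "\<And>a b. a \<in> A \<Longrightarrow> b \<in> A \<Longrightarrow> a = b"
  ultimately have "A \<subseteq> {a}" by blast
  then show ?thesis by (rule finite_subset) simp
qed simp

lemma ordLeq_if_subset_ordIso: "A \<subseteq> D \<Longrightarrow> |D| =o |K| \<Longrightarrow> |A| \<le>o |K|"
  by (rule ordLeq_ordIso_trans[OF card_of_mono1])

lemma ordLess_if_not_ordIso: "|A| \<le>o |K| \<Longrightarrow> \<not> |A| =o |K| \<Longrightarrow> |A| <o |K|"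
  using ordLeq_iff_ordLess_or_ordIso[of "|A|" "|K|"] by simp

lemma card_cofinite_subset:
  assumes K: "infinite K" and D: "|D| =o |K|" and fin: "finite (D - D')"
  shows "|D \<inter> D'| =o |K|"
proof (rule ccontr)
  assume "\<not> |D \<inter> D'| =o |K|"
  then have "|D \<inter> D'| <o |K|" using ordLess_if_not_ordIso ordLeq_if_subset_ordIso[OF _ D] by blast
  then have "|(D \<inter> D') \<union> (D - D')| <o |K|"
    using card_of_Un_ordLess_infinite[OF K] finite_ordLess_infinite[OF fin K] by blast
  moreover have "(D \<inter> D') \<union> (D - D') = D" by blast
  ultimately show False using D not_ordLess_ordIso by auto
qed

lemma finite_UN_ordLess_infinite:
  assumes K: "infinite K" and Y: "finite Y"
  shows "\<forall>y\<in>Y. |F y| <o |K| \<Longrightarrow> |\<Union>y\<in>Y. F y| <o |K|"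
  using Y
proof (induction Y rule: finite_induct)
  case empty
  then show ?case using finite_ordLess_infinite[OF finite.emptyI K] by simp
next
  case (insert y Y)
  then show ?case using card_of_Un_ordLess_infinite[OF K, of "F y"] by simp
qed

lemma UN_finite_ordLess_infinite:
  assumes K: "infinite K" and S: "|S| <o |K|" and R: "\<forall>s\<in>S. finite (R s)"
  shows "|\<Union>s\<in>S. R s| <o |K|"
proof (cases "finite S")
  case True
  then show ?thesis using R finite_ordLess_infinite K by blast
next
  case False
  have "\<forall>s\<in>S. |R s| \<le>o |S|" using R finite_ordLess_infinite[OF _ False] ordLess_imp_ordLeq by blast
  then have "|\<Union>s\<in>S. R s| \<le>o |S|"
    using card_of_UNION_ordLeq_infinite[OF False] card_of_refl ordIso_iff_ordLeq by blast
  then show ?thesis using S ordLeq_ordLess_trans by blast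
qed

lemma pigeonhole_card:
  assumes K: "infinite K" and X: "|X| =o |K|" and g: "g ` X \<subseteq> Y" and Y: "finite Y"
  shows "\<exists>y. |{x\<in>X. g x = y}| =o |K|"
proof (rule ccontr)
  assume no: "\<nexists>y. |{x\<in>X. g x = y}| =o |K|"
  have "|{x\<in>X. g x = y}| <o |K|" for y
  proof (rule ordLess_if_not_ordIso)
    show "|{x\<in>X. g x = y}| \<le>o |K|" by (rule ordLeq_if_subset_ordIso[OF _ X]) blast
  qed (use no in blast)
  then have "|\<Union>y\<in>Y. {x\<in>X. g x = y}| <o |K|" by (intro finite_UN_ordLess_infinite[OF K Y]) blast
  moreover have "(\<Union>y\<in>Y. {x\<in>X. g x = y}) = X" using g by blast
  ultimately have "|X| <o |K|" by simp
  then show False using X not_ordLess_ordIso by blast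
qed

lemma exists_avoiding_member:
  assumes K: "infinite K" and D: "|D| =o |K|" and R: "\<forall>v. finite {C\<in>D. v \<in> R C}"
    and U: "|U| <o |K|"
  shows "\<exists>C\<in>D. R C \<inter> U = {}"
proof (rule ccontr)
  assume "\<not> ?thesis"
  then have "D \<subseteq> (\<Union>v\<in>U. {C\<in>D. v \<in> R C})" by blast
  then have "|D| \<le>o |\<Union>v\<in>U. {C\<in>D. v \<in> R C}|" by (rule card_of_mono1)
  moreover have "|\<Union>v\<in>U. {C\<in>D. v \<in> R C}| <o |K|"
    using UN_finite_ordLess_infinite[OF K U, of "\<lambda>v. {C\<in>D. v \<in> R C}"] R by blast
  ultimately have "|D| <o |K|" by (rule ordLeq_ordLess_trans)
  then show False using D not_ordLess_ordIso by blast
qed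

lemma exists_maximal_disjoint_subfamily:
  obtains M where "M \<subseteq> A" "\<forall>x\<in>M. \<forall>y\<in>M. x \<noteq> y \<longrightarrow> R x \<inter> R y = {}"
    "\<And>a. a \<in> A \<Longrightarrow> a \<notin> M \<Longrightarrow> \<exists>x\<in>M. R a \<inter> R x \<noteq> {}"
proof -
  define F where "F = {S. S \<subseteq> A \<and> (\<forall>x\<in>S. \<forall>y\<in>S. x \<noteq> y \<longrightarrow> R x \<inter> R y = {})}"
  have "\<forall>\<C>\<in>chains F. \<Union>\<C> \<in> F"
  proof
    fix \<C> assume \<C>: "\<C> \<in> chains F"
    have "\<forall>x\<in>\<Union>\<C>. \<forall>y\<in>\<Union>\<C>. x \<noteq> y \<longrightarrow> R x \<inter> R y = {}"
    proof (intro ballI impI)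
      fix x y assume "x \<in> \<Union>\<C>" "y \<in> \<Union>\<C>" "x \<noteq> y"
      moreover from \<C> have "\<forall>S1\<in>\<C>. \<forall>S2\<in>\<C>. S1 \<subseteq> S2 \<or> S2 \<subseteq> S1"
        unfolding chains_def chain_subset_def by blast
      ultimately obtain S where "S \<in> \<C>" "x \<in> S" "y \<in> S" by blast
      with \<C> \<open>x \<noteq> y\<close> show "R x \<inter> R y = {}" unfolding chains_def F_def by blast
    qed
    with \<C> show "\<Union>\<C> \<in> F" unfolding chains_def F_def by blast
  qed
  then obtain M where M: "M \<in> F" "\<forall>X\<in>F. M \<subseteq> X \<longrightarrow> X = M" using Zorn_Lemma by blast
  then have MA: "M \<subseteq> A" and M_disjoint: "\<forall>x\<in>M. \<forall>y\<in>M. x \<noteq> y \<longrightarrow> R x \<inter> R y = {}"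
    unfolding F_def by auto
  have "\<exists>x\<in>M. R a \<inter> R x \<noteq> {}" if a: "a \<in> A" "a \<notin> M" for a
  proof (rule ccontr)
    assume "\<not> ?thesis"
    then have "insert a M \<in> F" using a(1) MA M_disjoint unfolding F_def by auto
    then show False using M(2) a(2) by blast
  qed
  with MA M_disjoint show thesis by (rule that)
qed

lemma exists_disjoint_subfamily:
  assumes K: "infinite K"
    and R: "\<forall>a\<in>A. R a \<noteq> {} \<and> finite (R a)"
    and avoid: "\<And>U. |U| <o |K| \<Longrightarrow> \<exists>a\<in>A. R a \<inter> U = {}"
  shows "\<exists>S\<subseteq>A. |S| =o |K| \<and> (\<forall>x\<in>S. \<forall>y\<in>S. x \<noteq> y \<longrightarrow> R x \<inter> R y = {})"
proof -
  obtain M where M: "M \<subseteq> A" "\<forall>x\<in>M. \<forall>y\<in>M. x \<noteq> y \<longrightarrow> R x \<inter> R y = {}"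
    and maximal: "\<And>a. a \<in> A \<Longrightarrow> a \<notin> M \<Longrightarrow> \<exists>x\<in>M. R a \<inter> R x \<noteq> {}"
    using exists_maximal_disjoint_subfamily[of A R] by blast
  have "\<not> |M| <o |K|"
  proof
    assume "|M| <o |K|"
    then have "|\<Union>s\<in>M. R s| <o |K|" using UN_finite_ordLess_infinite[OF K, of M R] R M(1) by blast
    then obtain a where a: "a \<in> A" "R a \<inter> (\<Union>s\<in>M. R s) = {}" using avoid by blast
    moreover have "R a \<noteq> {}" using R a(1) by blast
    ultimately have "a \<notin> M" by blast
    then show False using maximal[OF a(1)] a(2) by blast
  qed
  then have "|K| \<le>o |M|" using not_ordLess_iff_ordLeq[OF card_of_Well_order card_of_Well_order] by blast
  then obtain S where S: "S \<subseteq> M" "|K| =o |S|" using internalize_card_of_ordLeq2[of K M] by blast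
  show ?thesis
  proof (intro exI conjI)
    show "S \<subseteq> A" "|S| =o |K|" using S M(1) ordIso_symmetric by auto
    show "\<forall>x\<in>S. \<forall>y\<in>S. x \<noteq> y \<longrightarrow> R x \<inter> R y = {}" using S(1) M(2) by blast
  qed
qed

section \<open>Path systems and regions\<close>

lemma b_path_systemD:
  assumes "b_path_system E \<I>M \<I>N BM BN \<kappa> \<P>"
  shows "\<And>p. p \<in> \<P> \<Longrightarrow> b_path E \<I>M \<I>N BM BN p"
    and "\<And>p. p \<in> \<P> \<Longrightarrow> p \<noteq> []"
    and "\<And>p. p \<in> \<P> \<Longrightarrow> ter p \<in> set p"
    and "\<And>p q. p \<in> \<P> \<Longrightarrow> q \<in> \<P> \<Longrightarrow> p \<noteq> q \<Longrightarrow> set p \<inter> set q = {}"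
    and "|\<P>| =o \<kappa>"
  using assms unfolding b_path_system_def b_path_def dpath_def ter_def by auto

lemma b_path_system_ter_inj:
  assumes "b_path_system E \<I>M \<I>N BM BN \<kappa> \<P>"
  shows "inj_on ter \<P>"
  using b_path_systemD(3,4)[OF assms] by (metis disjoint_iff inj_onI)

lemma b_path_system_restrict_Un:
  assumes K: "infinite K"
    and P0: "b_path_system E \<I>M \<I>N BM BN |K| \<P>0" and P1: "b_path_system E \<I>M \<I>N BM BN |K| \<P>1"
    and U: "U0 \<inter> U1 = {}" and large: "|K| \<le>o |{p\<in>\<P>0. set p \<subseteq> U0}|"
  shows "b_path_system E \<I>M \<I>N BM BN |K| ({p\<in>\<P>0. set p \<subseteq> U0} \<union> {p\<in>\<P>1. set p \<subseteq> U1})"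
    (is "b_path_system _ _ _ _ _ _ ?\<P>")
proof -
  have "|\<P>0| \<le>o |K|" "|\<P>1| \<le>o |K|"
    using b_path_systemD(5)[OF P0] b_path_systemD(5)[OF P1] ordIso_iff_ordLeq by blast+
  then have "|\<P>0 \<union> \<P>1| \<le>o |K|"
    using card_of_Un_ordLeq_infinite_Field[of "|K|" \<P>0 \<P>1] K card_of_Card_order[of K] Field_card_of[of K]
    by simp
  then have "|?\<P>| \<le>o |K|" using card_of_mono1[of ?\<P> "\<P>0 \<union> \<P>1"] ordLeq_transitive by blast
  moreover have "|K| \<le>o |?\<P>|" using large card_of_mono1[of _ ?\<P>] ordLeq_transitive by blast
  moreover have "set p \<inter> set q = {}" if "p \<in> ?\<P>" "q \<in> ?\<P>" "p \<noteq> q" for p q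
    using that U b_path_systemD(4)[OF P0] b_path_systemD(4)[OF P1] by blast
  ultimately show ?thesis
    using b_path_systemD(1)[OF P0] b_path_systemD(1)[OF P1]
    unfolding b_path_system_def ordIso_iff_ordLeq by blast
qed

lemma b_path_system_injection:
  assumes P: "b_path_system E \<I>M \<I>N BM BN |K| \<P>" and D: "|D| =o |K|"
  obtains h where "inj_on h D" "h ` D \<subseteq> \<P>"
proof -
  have "|D| =o |\<P>|" using ordIso_transitive[OF D ordIso_symmetric[OF b_path_systemD(5)[OF P]]] .
  then have "|D| \<le>o |\<P>|" using ordIso_iff_ordLeq by blast
  then have "\<exists>h. inj_on h D \<and> h ` D \<subseteq> \<P>" by (simp only: card_of_ordLeq[symmetric])
  then show thesis using that by blast
qed

definition region :: "'a list set \<Rightarrow> ('a set \<Rightarrow> 'a list) \<Rightarrow> 'a set \<Rightarrow> 'a set \<Rightarrow> 'a set" where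
  "region \<P> h K C = (C - K) \<union> (\<Union>p\<in>{p\<in>\<P>. ter p \<in> C - K}. set p) \<union> set (h C)"

lemma region_subsets: "C - K \<subseteq> region \<P> h K C" "set (h C) \<subseteq> region \<P> h K C"
  unfolding region_def by auto

lemma petal_covered_within_region:
  assumes "C - K \<subseteq> I \<union> ter ` \<P>" "region \<P> h K C \<subseteq> U"
  shows "C - K \<subseteq> I \<union> ter ` {p\<in>\<P>. set p \<subseteq> U}"
proof
  fix w assume w: "w \<in> C - K"
  show "w \<in> I \<union> ter ` {p\<in>\<P>. set p \<subseteq> U}"
  proof (cases "w \<in> I")
    case False
    then obtain p where p: "p \<in> \<P>" "w = ter p" using assms(1) w by blast
    then have "set p \<subseteq> region \<P> h K C" using w unfolding region_def by blast
    with p assms(2) show ?thesis by blast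
  qed simp
qed

lemma region_finite_nonempty:
  assumes P: "b_path_system E \<I>M \<I>N BM BN \<kappa> \<P>" and "finite C" "h C \<in> \<P>"
  shows "finite (region \<P> h K C) \<and> region \<P> h K C \<noteq> {}"
proof -
  have "finite {p\<in>\<P>. ter p \<in> C - K}"
    using inj_on_finite[of ter "{p\<in>\<P>. ter p \<in> C - K}" "C - K"] b_path_system_ter_inj[OF P]
      \<open>finite C\<close> inj_on_subset by fastforce
  then show ?thesis
    using assms b_path_systemD(2)[OF P] unfolding region_def by simp
qed

lemma finite_regions_containing:
  assumes P: "b_path_system E \<I>M \<I>N BM BN \<kappa> \<P>" and h: "inj_on h D" "h ` D \<subseteq> \<P>"
    and petals: "\<forall>C\<in>D. \<forall>C'\<in>D. C \<noteq> C' \<longrightarrow> (C - K) \<inter> (C' - K) = {}"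
  shows "finite {C\<in>D. v \<in> region \<P> h K C}"
proof -
  have "finite {C\<in>D. v \<in> C - K}"
    by (rule finite_if_subsingleton) (use petals in blast)
  moreover have "finite {C\<in>D. \<exists>p\<in>\<P>. ter p \<in> C - K \<and> v \<in> set p}"
  proof (rule finite_if_subsingleton)
    fix C C' assume "C \<in> {C\<in>D. \<exists>p\<in>\<P>. ter p \<in> C - K \<and> v \<in> set p}"
      "C' \<in> {C\<in>D. \<exists>p\<in>\<P>. ter p \<in> C - K \<and> v \<in> set p}"
    then obtain p q where "p \<in> \<P>" "q \<in> \<P>" "ter p \<in> C - K" "ter q \<in> C' - K" "v \<in> set p" "v \<in> set q"
      "C \<in> D" "C' \<in> D" by blast
    then show "C = C'" using b_path_systemD(4)[OF P, of p q] petals by blast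
  qed
  moreover have "finite {C\<in>D. v \<in> set (h C)}"
  proof (rule finite_if_subsingleton)
    fix C C' assume "C \<in> {C\<in>D. v \<in> set (h C)}" "C' \<in> {C\<in>D. v \<in> set (h C)}"
    then show "C = C'" using b_path_systemD(4)[OF P, of "h C" "h C'"] h inj_onD[OF h(1)] by blast
  qed
  moreover have "{C\<in>D. v \<in> region \<P> h K C} \<subseteq> {C\<in>D. v \<in> C - K}
      \<union> {C\<in>D. \<exists>p\<in>\<P>. ter p \<in> C - K \<and> v \<in> set p} \<union> {C\<in>D. v \<in> set (h C)}"
    unfolding region_def by blast
  ultimately show ?thesis by (simp add: finite_subset)
qed

lemma exists_disjoint_region_pairs:
  assumes K: "infinite K" and D0: "|D0| =o |K|" and D1: "|D1| =o |K|"
    and R0: "\<forall>C\<in>D0. finite (R0 C) \<and> R0 C \<noteq> {}" "\<forall>v. finite {C\<in>D0. v \<in> R0 C}"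
    and R1: "\<forall>C\<in>D1. finite (R1 C) \<and> R1 C \<noteq> {}" "\<forall>v. finite {C\<in>D1. v \<in> R1 C}"
  obtains S where "S \<subseteq> D0 \<times> D1" "|S| =o |K|" "inj_on fst S"
    "(\<Union>x\<in>S. R0 (fst x)) \<inter> (\<Union>x\<in>S. R1 (snd x)) = {}"
    "\<And>x y. x \<in> S \<Longrightarrow> y \<in> S \<Longrightarrow> x \<noteq> y \<Longrightarrow>
       (R0 (fst x) \<union> R1 (snd x)) \<inter> (R0 (fst y) \<union> R1 (snd y)) = {}"
proof -
  define A where "A = {x \<in> D0 \<times> D1. R0 (fst x) \<inter> R1 (snd x) = {}}"
  have "\<exists>x\<in>A. (R0 (fst x) \<union> R1 (snd x)) \<inter> U = {}" if U: "|U| <o |K|" for U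
  proof -
    obtain C where C: "C \<in> D0" "R0 C \<inter> U = {}" using exists_avoiding_member[OF K D0 R0(2) U] by blast
    have "|U \<union> R0 C| <o |K|"
      using card_of_Un_ordLess_infinite[OF K U] finite_ordLess_infinite[OF _ K] R0(1) C(1) by blast
    then obtain C' where "C' \<in> D1" "R1 C' \<inter> (U \<union> R0 C) = {}"
      using exists_avoiding_member[OF K D1 R1(2)] by blast
    with C show ?thesis unfolding A_def by force
  qed
  moreover have "\<forall>x\<in>A. R0 (fst x) \<union> R1 (snd x) \<noteq> {} \<and> finite (R0 (fst x) \<union> R1 (snd x))"
    using R0(1) R1(1) unfolding A_def by auto
  ultimately obtain S where S: "S \<subseteq> A" "|S| =o |K|"
    "\<forall>x\<in>S. \<forall>y\<in>S. x \<noteq> y \<longrightarrow> (R0 (fst x) \<union> R1 (snd x)) \<inter> (R0 (fst y) \<union> R1 (snd y)) = {}"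
    using exists_disjoint_subfamily[OF K, of A "\<lambda>x. R0 (fst x) \<union> R1 (snd x)"] by blast
  have disjoint: "(R0 (fst x) \<union> R1 (snd x)) \<inter> (R0 (fst y) \<union> R1 (snd y)) = {}"
    if "x \<in> S" "y \<in> S" "x \<noteq> y" for x y
    using S(3) that by simp
  have "inj_on fst S"
  proof (rule inj_onI, rule ccontr)
    fix x y assume xy: "x \<in> S" "y \<in> S" "fst x = fst y" "x \<noteq> y"
    have "R0 (fst x) \<inter> R0 (fst y) = {}" using disjoint[OF xy(1,2,4)] by blast
    moreover have "R0 (fst x) \<noteq> {}" using R0(1) S(1) xy(1) unfolding A_def by auto
    ultimately show False using xy(3) by simp
  qed
  moreover have "R0 (fst x) \<inter> R1 (snd y) = {}" if "x \<in> S" "y \<in> S" for x y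
  proof (cases "x = y")
    case True
    then show ?thesis using S(1) that(1) unfolding A_def by auto
  next
    case False
    then show ?thesis using disjoint[OF that False] by blast
  qed
  then have "(\<Union>x\<in>S. R0 (fst x)) \<inter> (\<Union>x\<in>S. R1 (snd x)) = {}" by blast
  moreover have "S \<subseteq> D0 \<times> D1" using S(1) unfolding A_def by blast
  ultimately show thesis using that S(2) disjoint by blast
qed

lemma card_le_paths_within:
  assumes "inj_on h T" "h ` T \<subseteq> \<P>" "\<forall>C\<in>T. set (h C) \<subseteq> U" "|T| =o |K|"
  shows "|K| \<le>o |{p\<in>\<P>. set p \<subseteq> U}|"
proof -
  have "h ` T \<subseteq> {p\<in>\<P>. set p \<subseteq> U}" using assms(2,3) by blast
  with assms(1) have "\<exists>g. inj_on g T \<and> g ` T \<subseteq> {p\<in>\<P>. set p \<subseteq> U}" by blast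
  then have "|T| \<le>o |{p\<in>\<P>. set p \<subseteq> U}|" by (simp only: card_of_ordLeq)
  then show ?thesis by (rule ordIso_ordLeq_trans[OF ordIso_symmetric[OF assms(4)]])
qed

section \<open>Strong circuit elimination in finitary matroids\<close>

locale fmatroid =
  fixes E :: "'a set" and Ind :: "'a set set"
  assumes finitary_matroid: "finitary_matroid E Ind"
begin

lemma indep_subset_ground [rule_format]: "\<forall>A\<in>Ind. A \<subseteq> E"
  using finitary_matroid unfolding finitary_matroid_def by (elim conjE) assumption

lemma indep_subset [rule_format]: "\<forall>A\<in>Ind. \<forall>B. B \<subseteq> A \<longrightarrow> B \<in> Ind"
  using finitary_matroid unfolding finitary_matroid_def by (elim conjE) assumption

lemma augment_towards_base [rule_format]:
  "\<forall>A B. A \<in> Ind \<and> \<not> maximal_in Ind A \<and> maximal_in Ind B \<longrightarrow> (\<exists>x\<in>B - A. insert x A \<in> Ind)"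
  using finitary_matroid unfolding finitary_matroid_def by (elim conjE) assumption

lemma exists_maximal_between [rule_format]:
  "\<forall>A X. A \<in> Ind \<and> A \<subseteq> X \<and> X \<subseteq> E \<longrightarrow> (\<exists>J. maximal_in {J'. J' \<in> Ind \<and> A \<subseteq> J' \<and> J' \<subseteq> X} J)"
  using finitary_matroid unfolding finitary_matroid_def by (elim conjE) assumption

lemma finitary [rule_format]:
  "\<forall>X. X \<subseteq> E \<and> (\<forall>F. F \<subseteq> X \<and> finite F \<longrightarrow> F \<in> Ind) \<longrightarrow> X \<in> Ind"
  using finitary_matroid unfolding finitary_matroid_def by (elim conjE) assumption

lemma finite_dependent_subset: "X \<subseteq> E \<Longrightarrow> X \<notin> Ind \<Longrightarrow> \<exists>F\<subseteq>X. finite F \<and> F \<notin> Ind"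
  using finitary by blast

lemma exists_base_extending:
  assumes "A \<in> Ind"
  obtains B where "maximal_in Ind B" "A \<subseteq> B"
proof -
  obtain J where "maximal_in {J'. J' \<in> Ind \<and> A \<subseteq> J' \<and> J' \<subseteq> E} J"
    using exists_maximal_between assms indep_subset_ground by blast
  then have "maximal_in Ind J" "A \<subseteq> J"
    using indep_subset_ground unfolding maximal_in_def by blast+
  then show thesis by (rule that)
qed

lemma exists_base_between:
  assumes "A \<in> Ind" "A \<subseteq> Y" "Y \<subseteq> E" "maximal_in Ind P" "P \<subseteq> Y"
  obtains B where "maximal_in Ind B" "A \<subseteq> B" "B \<subseteq> Y"
proof -
  obtain J where J: "maximal_in {J'. J' \<in> Ind \<and> A \<subseteq> J' \<and> J' \<subseteq> Y} J"
    using exists_maximal_between assms by blast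
  then have JI: "J \<in> Ind" "A \<subseteq> J" "J \<subseteq> Y" unfolding maximal_in_def by auto
  have base: "maximal_in Ind J"
  proof (rule ccontr)
    assume "\<not> maximal_in Ind J"
    then obtain z where "z \<in> P - J" "insert z J \<in> Ind"
      using augment_towards_base JI assms(4) by blast
    with J JI assms(5) show False unfolding maximal_in_def by blast
  qed
  from base JI(2,3) show thesis by (rule that)
qed

text \<open>Each element of \<open>S\<close> is exchanged into \<open>Q\<close> against a new element of \<open>P - Q\<close>.\<close>
lemma card_base_diff_le:
  assumes "finite S"
  shows "maximal_in Ind P \<Longrightarrow> maximal_in Ind Q \<Longrightarrow> S \<subseteq> Q - P \<Longrightarrow> finite (P - Q)
     \<Longrightarrow> card S \<le> card (P - Q)"
  using assms
proof (induction S arbitrary: Q rule: finite_induct)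
  case empty
  then show ?case by simp
next
  case (insert y S)
  have QI: "Q \<in> Ind" "P \<in> Ind" using insert.prems unfolding maximal_in_def by auto
  have yQ: "y \<in> Q" "y \<notin> P" using insert.prems by auto
  have "Q - {y} \<in> Ind" "\<not> maximal_in Ind (Q - {y})"
    using indep_subset QI yQ unfolding maximal_in_def by blast+
  then obtain x where x: "x \<in> P - (Q - {y})" "insert x (Q - {y}) \<in> Ind"
    using augment_towards_base insert.prems(1) by blast
  have xPQ: "x \<in> P - Q" using x yQ by auto
  have "insert x (Q - {y}) \<union> P \<subseteq> E" using indep_subset_ground x(2) QI(2) by blast
  then obtain J where J: "maximal_in Ind J" "insert x (Q - {y}) \<subseteq> J" "J \<subseteq> insert x (Q - {y}) \<union> P"
    using exists_base_between[OF x(2), of "insert x (Q - {y}) \<union> P" P] insert.prems(1) by blast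
  have PJ: "P - J \<subseteq> (P - Q) - {x}" using J yQ by auto
  have "S \<subseteq> J - P" using insert J by auto
  moreover have "finite (P - J)" using PJ insert.prems(4) finite_subset by blast
  ultimately have "card S \<le> card (P - J)" using insert.IH[OF insert.prems(1) J(1)] by blast
  also have "\<dots> \<le> card ((P - Q) - {x})" using card_mono PJ insert.prems(4) by blast
  also have "\<dots> = card (P - Q) - 1" using xPQ insert.prems(4) by simp
  finally have "card S \<le> card (P - Q) - 1" .
  moreover have "P - Q \<noteq> {}" using xPQ by blast
  then have "card (P - Q) \<ge> 1" using insert.prems(4) by (simp add: Suc_le_eq card_gt_0_iff)
  moreover have "card (insert y S) = card S + 1" using insert.hyps by simp
  ultimately show ?case by linarith
qed

lemma finite_augment:
  assumes A: "A \<in> Ind" "finite A" and B: "B \<in> Ind" "finite B" and card: "card A < card B"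
  shows "\<exists>x\<in>B - A. insert x A \<in> Ind"
proof (rule ccontr)
  assume no: "\<not> ?thesis"
  obtain Bh where Bh: "maximal_in Ind Bh" "B \<subseteq> Bh" using exists_base_extending B by blast
  have "A \<union> Bh \<subseteq> E" using Bh A indep_subset_ground unfolding maximal_in_def by auto
  then obtain Ah where Ah: "maximal_in Ind Ah" "A \<subseteq> Ah" "Ah \<subseteq> A \<union> Bh"
    using exists_base_between[OF A(1), of "A \<union> Bh" Bh] Bh by auto
  have "Ah \<inter> (B - A) = {}"
    using no Ah indep_subset unfolding maximal_in_def by (meson Diff_iff disjoint_iff insert_subset)
  then have "B - A \<subseteq> Bh - Ah" "Ah - Bh \<subseteq> A - B" using Ah Bh by auto
  then have "card (B - A) \<le> card (A - B)"
    using card_base_diff_le[of "B - A" Ah Bh] Ah Bh B A finite_subset card_mono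
    by (metis finite_Diff le_trans)
  moreover have "card (B - A) = card B - card (A \<inter> B)" "card (A - B) = card A - card (A \<inter> B)"
    using A(2) B(2) card_Diff_subset_Int[of B A] card_Diff_subset_Int[of A B] by (simp_all add: Int_commute)
  moreover have "card (A \<inter> B) \<le> card A" using A(2) by (intro card_mono) auto
  ultimately show False using card by linarith
qed

lemma circuitD:
  assumes "C \<in> circuits E Ind"
  shows "C \<subseteq> E" "C \<notin> Ind" "D \<subset> C \<Longrightarrow> D \<in> Ind"
  using assms unfolding circuits_def by auto

lemma circuit_finite:
  assumes C: "C \<in> circuits E Ind" shows "finite C"
proof -
  obtain F where F: "F \<subseteq> C" "finite F" "F \<notin> Ind"
    using finite_dependent_subset[OF circuitD(1,2)[OF C]] by blast
  then have "\<not> F \<subset> C" using circuitD(3)[OF C] by blast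
  with F show ?thesis by (simp add: psubset_eq)
qed

lemma exists_circuit_subset:
  assumes "X \<subseteq> E" "X \<notin> Ind"
  obtains C where "C \<in> circuits E Ind" "C \<subseteq> X"
proof -
  obtain F where F: "F \<subseteq> X" "finite F" "F \<notin> Ind" using finite_dependent_subset[OF assms] by blast
  have "{D. D \<subseteq> F \<and> D \<notin> Ind} \<subseteq> Pow F" by blast
  then have "finite {D. D \<subseteq> F \<and> D \<notin> Ind}" using F(2) by (simp add: finite_subset)
  moreover have "{D. D \<subseteq> F \<and> D \<notin> Ind} \<noteq> {}" using F(3) by blast
  ultimately have "\<exists>C\<in>{D. D \<subseteq> F \<and> D \<notin> Ind}. \<forall>D\<in>{D. D \<subseteq> F \<and> D \<notin> Ind}. D \<subseteq> C \<longrightarrow> C = D"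
    by (rule finite_has_minimal)
  then obtain C
    where C: "C \<in> {D. D \<subseteq> F \<and> D \<notin> Ind}" "\<forall>D\<in>{D. D \<subseteq> F \<and> D \<notin> Ind}. D \<subseteq> C \<longrightarrow> C = D" ..
  have "D \<in> Ind" if D: "D \<subset> C" for D
  proof (rule ccontr)
    assume "D \<notin> Ind"
    moreover have "D \<subseteq> F" using D C(1) by blast
    ultimately have "C = D" using C(2) D by blast
    then show False using D by blast
  qed
  then have "C \<in> circuits E Ind" using C(1) F(1) assms(1) unfolding circuits_def by blast
  moreover have "C \<subseteq> X" using C(1) F(1) by blast
  ultimately show thesis by (rule that)
qed

lemma circuit_in_insert:
  assumes A: "A \<in> Ind" and dep: "insert f A \<notin> Ind" "insert f A \<subseteq> E"
  shows "\<exists>C\<in>circuits E Ind. f \<in> C \<and> C \<subseteq> insert f A"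
proof -
  obtain C where C: "C \<in> circuits E Ind" "C \<subseteq> insert f A" using exists_circuit_subset[OF dep(2,1)] by blast
  have "\<not> C \<subseteq> A" using indep_subset[OF A] circuitD(2)[OF C(1)] by blast
  with C show ?thesis by blast
qed

definition basis_of :: "'a set \<Rightarrow> 'a set \<Rightarrow> bool" where
  "basis_of Y A \<longleftrightarrow> maximal_in {J \<in> Ind. J \<subseteq> Y} A"

lemma basis_ofD:
  assumes "basis_of Y A"
  shows "A \<in> Ind" "A \<subseteq> Y" "B \<in> Ind \<Longrightarrow> A \<subseteq> B \<Longrightarrow> B \<subseteq> Y \<Longrightarrow> B = A"
  using assms unfolding basis_of_def maximal_in_def by auto

lemma exists_basis_of:
  assumes "Y \<subseteq> E" "A0 \<in> Ind" "A0 \<subseteq> Y"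
  obtains A where "basis_of Y A" "A0 \<subseteq> A"
proof -
  obtain J where "maximal_in {J'. J' \<in> Ind \<and> A0 \<subseteq> J' \<and> J' \<subseteq> Y} J"
    using exists_maximal_between assms by blast
  then have "basis_of Y J" "A0 \<subseteq> J" unfolding basis_of_def maximal_in_def by blast+
  then show thesis by (rule that)
qed

lemma basis_of_card_le:
  assumes Y: "finite Y" and A: "basis_of Y A" and B: "basis_of Y B"
  shows "card A \<le> card B"
proof (rule ccontr)
  have fin: "finite A" "finite B" using basis_ofD(2)[OF A] basis_ofD(2)[OF B] Y finite_subset by auto
  assume "\<not> card A \<le> card B"
  then obtain x where x: "x \<in> A - B" "insert x B \<in> Ind"
    using finite_augment[OF basis_ofD(1)[OF B] fin(2) basis_ofD(1)[OF A] fin(1)] by auto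
  then have "insert x B = B" using basis_ofD(2)[OF A] basis_ofD(2,3)[OF B] by blast
  with x show False by blast
qed

text \<open>Since all bases of the finite set \<open>Y\<close> have the same size, the independent set \<open>C - x\<close>
  extends to a base of \<open>Y\<close> that cannot be augmented from \<open>A + x\<close>.\<close>
lemma insert_dependent_if_circuit:
  assumes Y: "finite Y" "Y \<subseteq> E" and A: "basis_of Y A"
    and C: "C \<in> circuits E Ind" "x \<in> C" "C \<subseteq> insert x Y" and "x \<notin> Y"
  shows "insert x A \<notin> Ind"
proof
  assume xA: "insert x A \<in> Ind"
  have "C - {x} \<in> Ind" using circuitD(3)[OF C(1)] C(2) by blast
  then obtain A0 where A0: "basis_of Y A0" "C - {x} \<subseteq> A0"
    using exists_basis_of[OF Y(2)] C(3) by blast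
  have fin: "finite A" "finite A0" using basis_ofD(2)[OF A] basis_ofD(2)[OF A0(1)] Y(1) finite_subset by auto
  have "x \<notin> A" using basis_ofD(2)[OF A] \<open>x \<notin> Y\<close> by blast
  then have "card A0 < card (insert x A)" using basis_of_card_le[OF Y(1) A0(1) A] fin by simp
  then obtain z where z: "z \<in> insert x A - A0" "insert z A0 \<in> Ind"
    using finite_augment[OF basis_ofD(1)[OF A0(1)] fin(2) xA] fin(1) by auto
  show False
  proof (cases "z = x")
    case True
    then have "C \<subseteq> insert z A0" using A0(2) by blast
    then show False using indep_subset[OF z(2)] circuitD(2)[OF C(1)] by blast
  next
    case False
    then have "insert z A0 = A0" using z basis_ofD(2)[OF A] basis_ofD(2,3)[OF A0(1)] by blast
    with z show False by blast
  qed
qed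

lemma basis_of_insert:
  assumes A: "basis_of Y A" and dep: "insert x A \<notin> Ind"
  shows "basis_of (insert x Y) A"
  unfolding basis_of_def maximal_in_def
proof (intro conjI ballI impI)
  show "A \<in> {J \<in> Ind. J \<subseteq> insert x Y}" using basis_ofD(1,2)[OF A] by blast
  fix B assume B: "B \<in> {J \<in> Ind. J \<subseteq> insert x Y}" "A \<subseteq> B"
  then have "B \<in> Ind" "B \<subseteq> insert x Y" by auto
  have "x \<notin> B"
  proof
    assume "x \<in> B"
    then have "insert x A \<subseteq> B" using B(2) by blast
    with dep show False using indep_subset[OF \<open>B \<in> Ind\<close>] by blast
  qed
  then have "B \<subseteq> Y" using \<open>B \<subseteq> insert x Y\<close> by blast
  then show "B = A" using basis_ofD(3)[OF A \<open>B \<in> Ind\<close> B(2)] by blast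
qed

text \<open>Choose a base \<open>A\<close> of \<open>(C1 \<union> C2) - {e, f}\<close>; the circuit \<open>C2\<close> shows that \<open>A\<close> is also a base after
  adding \<open>e\<close>, and then \<open>C1\<close> shows that \<open>A + f\<close> is dependent.\<close>
lemma strong_circuit_elim_left:
  assumes C1: "C1 \<in> circuits E Ind" and C2: "C2 \<in> circuits E Ind" and e: "e \<in> C1" "e \<in> C2"
    and f: "f \<in> C1" "f \<notin> C2"
  shows "\<exists>C\<in>circuits E Ind. f \<in> C \<and> C \<subseteq> (C1 \<union> C2) - {e}"
proof -
  define Y where "Y = (C1 \<union> C2) - {e, f}"
  have C12: "C1 \<union> C2 \<subseteq> E" "finite (C1 \<union> C2)"
    using circuitD(1)[OF C1] circuitD(1)[OF C2] circuit_finite[OF C1] circuit_finite[OF C2] by auto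
  then have Y: "finite Y" "Y \<subseteq> E" unfolding Y_def by auto
  have "{} \<in> Ind" using indep_subset[OF circuitD(3)[OF C1]] e(1) by blast
  then obtain A where A: "basis_of Y A" using exists_basis_of[OF Y(2)] by blast
  have "C2 \<subseteq> insert e Y" "e \<notin> Y" using f(2) unfolding Y_def by auto
  then have "insert e A \<notin> Ind" using insert_dependent_if_circuit[OF Y A C2 e(2)] by blast
  then have A': "basis_of (insert e Y) A" by (rule basis_of_insert[OF A])
  have "finite (insert e Y)" "insert e Y \<subseteq> E" "C1 \<subseteq> insert f (insert e Y)" "f \<notin> insert e Y"
    using Y C12 e f unfolding Y_def by auto
  then have "insert f A \<notin> Ind" using insert_dependent_if_circuit[OF _ _ A' C1 f(1)] by blast
  moreover have sub: "insert f A \<subseteq> (C1 \<union> C2) - {e}" using basis_ofD(2)[OF A] e f unfolding Y_def by auto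
  moreover have "insert f A \<subseteq> E" using sub C12(1) by blast
  ultimately obtain C where C: "C \<in> circuits E Ind" "f \<in> C" "C \<subseteq> insert f A"
    using circuit_in_insert[OF basis_ofD(1)[OF A]] by blast
  have "C \<subseteq> (C1 \<union> C2) - {e}" using C(3) sub by (rule order_trans)
  with C(1,2) show ?thesis by blast
qed

lemma strong_circuit_elim:
  assumes "C1 \<in> circuits E Ind" "C2 \<in> circuits E Ind" "e \<in> C1 \<inter> C2" "f \<in> (C1 - C2) \<union> (C2 - C1)"
  shows "\<exists>C\<in>circuits E Ind. f \<in> C \<and> C \<subseteq> (C1 \<union> C2) - {e}"
proof (cases "f \<in> C1")
  case True
  then show ?thesis using strong_circuit_elim_left[OF assms(1,2)] assms(3,4) by blast
next
  case False
  then show ?thesis using strong_circuit_elim_left[OF assms(2,1)] assms(3,4) by (simp add: Un_commute)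
qed


end

section \<open>Popular sets\<close>

text \<open>By the pigeonhole principle \<open>\<kappa>\<close> of the circuits have the same trace \<open>T\<close> on \<open>Z\<close>; outside
  \<open>Z\<close> they lie in the disjoint sets \<open>W x\<close>, so they form a \<open>\<Delta>\<close>-system with kernel \<open>T\<close>.\<close>
lemma popular_of_circuit_family:
  assumes K: "infinite K" and X: "|X| =o |K|" and Z: "finite Z" "f \<in> Z"
    and P: "b_path_system E \<I>M \<I>N BM BN |K| \<P>"
    and G: "\<And>x. x \<in> X \<Longrightarrow> G x \<in> circuits E \<I>M \<and> f \<in> G x \<and> G x \<subseteq> Z \<union> W x \<and> G x \<inter> W x \<noteq> {}"
    and W: "\<And>x. x \<in> X \<Longrightarrow> W x \<inter> Z = {} \<and> W x \<subseteq> I \<union> ter ` \<P>"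
    and W_disjoint: "\<And>x y. x \<in> X \<Longrightarrow> y \<in> X \<Longrightarrow> x \<noteq> y \<Longrightarrow> W x \<inter> W y = {}"
  shows "\<exists>T. popular E \<I>M \<I>N I BM BN |K| T \<and> f \<in> T \<and> T \<subseteq> Z"
proof -
  obtain T where T: "|{x\<in>X. G x \<inter> Z = T}| =o |K|"
    using pigeonhole_card[OF K X, of "\<lambda>x. G x \<inter> Z" "Pow Z"] Z by blast
  define X' where "X' = {x\<in>X. G x \<inter> Z = T}"
  have X': "x \<in> X \<and> G x \<inter> Z = T" if "x \<in> X'" for x using that unfolding X'_def by blast
  have X'_card: "|X'| =o |K|" using T unfolding X'_def .
  then have "infinite X'" using card_of_ordIso_finite K by blast
  then obtain x0 where "x0 \<in> X'" using infinite_imp_nonempty by blast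
  then have T_sub: "f \<in> T" "T \<subseteq> Z" "T \<subseteq> E" using X' G[of x0] Z unfolding circuits_def by blast+
  have "inj_on G X'"
  proof (rule inj_onI, rule ccontr)
    fix x y assume "x \<in> X'" "y \<in> X'" "G x = G y" "x \<noteq> y"
    then show False using X' G[of x] G[of y] W[of x] W_disjoint[of x y] by blast
  qed
  then have "|X'| =o |G ` X'|" by (rule card_of_ordIsoI[OF inj_on_imp_bij_betw])
  then have card: "|G ` X'| =o |K|" using X'_card ordIso_symmetric ordIso_transitive by blast
  have delta: "delta_system (G ` X') T"
    unfolding delta_system_def
  proof (intro ballI impI)
    fix C D assume "C \<in> G ` X'" "D \<in> G ` X'" "C \<noteq> D"
    then obtain x y where xy: "x \<in> X'" "y \<in> X'" "x \<noteq> y" "C = G x" "D = G y" by blast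
    then have "G x \<inter> G y \<subseteq> (Z \<union> W x) \<inter> (Z \<union> W y)" using X' G by blast
    also have "\<dots> \<subseteq> Z" using W_disjoint[of x y] xy X' by blast
    finally show "C \<inter> D = T" using xy X' by blast
  qed
  have petals: "\<forall>C\<in>G ` X'. C - T \<subseteq> I \<union> ter ` \<P>" using X' G W by blast
  have circuits: "G ` X' \<subseteq> circuits E \<I>M" using X' G by blast
  have "popular E \<I>M \<I>N I BM BN |K| T"
    unfolding popular_def
  proof (intro conjI exI[of _ \<P>] exI[of _ "G ` X'"])
    show "T \<noteq> {}" "T \<subseteq> E" using T_sub by auto
  qed (fact P circuits card delta petals)+
  with T_sub show ?thesis by blast
qed

context fmatroid
begin

lemma popularE:
  assumes K: "infinite K" and pop: "popular E Ind \<I>N I BM BN |K| K0" and Z: "finite Z"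
  obtains \<P> D where "b_path_system E Ind \<I>N BM BN |K| \<P>" "D \<subseteq> circuits E Ind" "|D| =o |K|"
    "\<forall>C\<in>D. K0 \<subseteq> C" "\<forall>C\<in>D. C - K0 \<subseteq> I \<union> ter ` \<P>"
    "\<forall>C\<in>D. \<forall>C'\<in>D. C \<noteq> C' \<longrightarrow> (C - K0) \<inter> (C' - K0) = {}"
    "\<forall>C\<in>D. (C - K0) \<inter> Z = {}"
proof -
  obtain \<P> D where P: "b_path_system E Ind \<I>N BM BN |K| \<P>" and D: "D \<subseteq> circuits E Ind" "|D| =o |K|"
    "delta_system D K0" "\<forall>C\<in>D. C - K0 \<subseteq> I \<union> ter ` \<P>"
    using pop unfolding popular_def by blast
  have "infinite D" using card_of_ordIso_finite[OF D(2)] K by simp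
  have kernel: "K0 \<subseteq> C" if C: "C \<in> D" for C
  proof -
    have "infinite (D - {C})" using \<open>infinite D\<close> by simp
    then obtain C' where "C' \<in> D" "C' \<noteq> C" using infinite_imp_nonempty by blast
    then have "C \<inter> C' = K0" using D(3) C unfolding delta_system_def by blast
    then show ?thesis by blast
  qed
  have petals: "\<forall>C\<in>D. \<forall>C'\<in>D. C \<noteq> C' \<longrightarrow> (C - K0) \<inter> (C' - K0) = {}"
    using D(3) unfolding delta_system_def by blast
  have "finite {C\<in>D. z \<in> C - K0}" for z
    by (rule finite_if_subsingleton) (use petals in blast)
  then have "finite (\<Union>z\<in>Z. {C\<in>D. z \<in> C - K0})" using Z by blast
  moreover have "D - {C. (C - K0) \<inter> Z = {}} \<subseteq> (\<Union>z\<in>Z. {C\<in>D. z \<in> C - K0})" by blast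
  ultimately have "finite (D - {C. (C - K0) \<inter> Z = {}})" by (rule finite_subset[rotated])
  then have card: "|D \<inter> {C. (C - K0) \<inter> Z = {}}| =o |K|" by (rule card_cofinite_subset[OF K D(2)])
  show thesis
    by (rule that[OF P _ card]) (use D(1,4) kernel petals in auto)
qed

lemma popular_finite:
  assumes K: "infinite K" and pop: "popular E Ind \<I>N I BM BN |K| K0"
  shows "finite K0"
proof -
  obtain D where D: "D \<subseteq> circuits E Ind" "|D| =o |K|" "\<forall>C\<in>D. K0 \<subseteq> C"
    using popularE[OF K pop finite.emptyI] by metis
  have "infinite D" using card_of_ordIso_finite[OF D(2)] K by simp
  then obtain C where C: "C \<in> D" using infinite_imp_nonempty by blast
  then have "finite C" using D(1) circuit_finite by blast
  moreover have "K0 \<subseteq> C" using C D(3) by blast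
  ultimately show ?thesis by (rule finite_subset[rotated])
qed

lemma circuit_or_popular_of_family:
  assumes K: "infinite K" and X: "|X| =o |K|" and Z: "finite Z" "f \<in> Z"
    and P: "b_path_system E Ind \<I>N BM BN |K| \<P>"
    and AB: "\<And>x. x \<in> X \<Longrightarrow> A x \<in> circuits E Ind \<and> B x \<in> circuits E Ind \<and> e \<in> A x \<inter> B x \<and>
               f \<in> (A x - B x) \<union> (B x - A x) \<and> A x \<union> B x \<subseteq> Z \<union> W x"
    and W: "\<And>x. x \<in> X \<Longrightarrow> W x \<inter> Z = {} \<and> W x \<subseteq> I \<union> ter ` \<P>"
    and W_disjoint: "\<And>x y. x \<in> X \<Longrightarrow> y \<in> X \<Longrightarrow> x \<noteq> y \<Longrightarrow> W x \<inter> W y = {}"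
  shows "\<exists>G. (G \<in> circuits E Ind \<or> popular E Ind \<I>N I BM BN |K| G) \<and> f \<in> G \<and> G \<subseteq> Z - {e}"
proof -
  define G where "G x = (SOME G. G \<in> circuits E Ind \<and> f \<in> G \<and> G \<subseteq> (A x \<union> B x) - {e})" for x
  have G: "G x \<in> circuits E Ind \<and> f \<in> G x \<and> G x \<subseteq> (Z \<union> W x) - {e}" if x: "x \<in> X" for x
  proof -
    have "\<exists>G. G \<in> circuits E Ind \<and> f \<in> G \<and> G \<subseteq> (A x \<union> B x) - {e}"
      using strong_circuit_elim[of "A x" "B x" e f] AB[OF x] by blast
    then have "G x \<in> circuits E Ind \<and> f \<in> G x \<and> G x \<subseteq> (A x \<union> B x) - {e}"
      unfolding G_def by (rule someI_ex)
    then show ?thesis using AB[OF x] by blast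
  qed
  show ?thesis
  proof (cases "\<exists>x\<in>X. G x \<inter> W x = {}")
    case True
    then obtain x where x: "x \<in> X" "G x \<inter> W x = {}" by blast
    then have "G x \<subseteq> Z - {e}" using G[OF x(1)] by blast
    then show ?thesis using G[OF x(1)] by blast
  next
    case False
    have "infinite X" using card_of_ordIso_finite[OF X] K by simp
    then obtain x0 where "x0 \<in> X" using infinite_imp_nonempty by blast
    then have "e \<noteq> f" using AB by blast
    obtain T where "popular E Ind \<I>N I BM BN |K| T" "f \<in> T" "T \<subseteq> Z - {e}"
    proof -
      have "\<exists>T. popular E Ind \<I>N I BM BN |K| T \<and> f \<in> T \<and> T \<subseteq> Z - {e}"
      proof (rule popular_of_circuit_family[OF K X _ _ P])
        show "finite (Z - {e})" "f \<in> Z - {e}" using Z \<open>e \<noteq> f\<close> by auto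
        fix x assume x: "x \<in> X"
        show "G x \<in> circuits E Ind \<and> f \<in> G x \<and> G x \<subseteq> Z - {e} \<union> W x \<and> G x \<inter> W x \<noteq> {}"
          using G[OF x] False x by blast
        show "W x \<inter> (Z - {e}) = {} \<and> W x \<subseteq> I \<union> ter ` \<P>" using W[OF x] by blast
      next
        fix x y assume "x \<in> X" "y \<in> X" "x \<noteq> y"
        then show "W x \<inter> W y = {}" by (rule W_disjoint)
      qed
      then show thesis using that by blast
    qed
    then show ?thesis by blast
  qed
qed

lemma elim_popular_circuit:
  assumes K: "infinite K" and K0: "popular E Ind \<I>N I BM BN |K| K0" and C1: "C1 \<in> circuits E Ind"
    and e: "e \<in> K0 \<inter> C1" and f: "f \<in> (K0 - C1) \<union> (C1 - K0)"
  shows "\<exists>G. (G \<in> circuits E Ind \<or> popular E Ind \<I>N I BM BN |K| G) \<and> f \<in> G \<and> G \<subseteq> (K0 \<union> C1) - {e}"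
proof -
  obtain \<P> D where P: "b_path_system E Ind \<I>N BM BN |K| \<P>" and D: "D \<subseteq> circuits E Ind" "|D| =o |K|"
    "\<forall>C\<in>D. K0 \<subseteq> C" "\<forall>C\<in>D. C - K0 \<subseteq> I \<union> ter ` \<P>"
    "\<forall>C\<in>D. \<forall>C'\<in>D. C \<noteq> C' \<longrightarrow> (C - K0) \<inter> (C' - K0) = {}" "\<forall>C\<in>D. (C - K0) \<inter> C1 = {}"
    using popularE[OF K K0 circuit_finite[OF C1]] by metis
  show ?thesis
  proof (rule circuit_or_popular_of_family[OF K D(2) _ _ P, where A = "\<lambda>C. C" and B = "\<lambda>_. C1"
        and W = "\<lambda>C. C - K0"])
    show "finite (K0 \<union> C1)" using popular_finite[OF K K0] circuit_finite[OF C1] by blast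
    show "f \<in> K0 \<union> C1" using f by blast
    fix C assume C: "C \<in> D"
    show "C \<in> circuits E Ind \<and> C1 \<in> circuits E Ind \<and> e \<in> C \<inter> C1 \<and> f \<in> (C - C1) \<union> (C1 - C) \<and>
        C \<union> C1 \<subseteq> (K0 \<union> C1) \<union> (C - K0)"
      using C D(1,3,6) C1 e f by blast
    show "(C - K0) \<inter> (K0 \<union> C1) = {} \<and> C - K0 \<subseteq> I \<union> ter ` \<P>" using C D(4,6) by blast
  next
    fix C C' assume "C \<in> D" "C' \<in> D" "C \<noteq> C'"
    then show "(C - K0) \<inter> (C' - K0) = {}" using D(5) by blast
  qed
qed


lemma region_properties:
  assumes P: "b_path_system E Ind \<I>N BM BN \<kappa> \<P>" and D: "D \<subseteq> circuits E Ind"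
    and h: "inj_on h D" "h ` D \<subseteq> \<P>"
    and petals: "\<forall>C\<in>D. \<forall>C'\<in>D. C \<noteq> C' \<longrightarrow> (C - K) \<inter> (C' - K) = {}"
  shows "\<forall>C\<in>D. finite (region \<P> h K C) \<and> region \<P> h K C \<noteq> {}"
    and "\<forall>v. finite {C\<in>D. v \<in> region \<P> h K C}"
proof
  fix C assume "C \<in> D"
  then have "finite C" "h C \<in> \<P>" using D h(2) circuit_finite by blast+
  then show "finite (region \<P> h K C) \<and> region \<P> h K C \<noteq> {}" by (rule region_finite_nonempty[OF P])
next
  show "\<forall>v. finite {C\<in>D. v \<in> region \<P> h K C}" using finite_regions_containing[OF P h petals] by blast
qed

text \<open>Paths inside pairwise disjoint regions of the two systems form a single path system; the
  extra path \<open>h C\<close> in each region guarantees that \<open>\<kappa>\<close> of them survive.\<close>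
lemma exists_pairs_with_common_path_system:
  assumes K: "infinite K"
    and P0: "b_path_system E Ind \<I>N BM BN |K| \<P>0" and D0: "D0 \<subseteq> circuits E Ind" "|D0| =o |K|"
      "\<forall>C\<in>D0. C - K0 \<subseteq> I \<union> ter ` \<P>0" "\<forall>C\<in>D0. \<forall>C'\<in>D0. C \<noteq> C' \<longrightarrow> (C - K0) \<inter> (C' - K0) = {}"
    and P1: "b_path_system E Ind \<I>N BM BN |K| \<P>1" and D1: "D1 \<subseteq> circuits E Ind" "|D1| =o |K|"
      "\<forall>C\<in>D1. C - K1 \<subseteq> I \<union> ter ` \<P>1" "\<forall>C\<in>D1. \<forall>C'\<in>D1. C \<noteq> C' \<longrightarrow> (C - K1) \<inter> (C' - K1) = {}"
  obtains S \<P> where "S \<subseteq> D0 \<times> D1" "|S| =o |K|" "b_path_system E Ind \<I>N BM BN |K| \<P>"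
    "\<And>x. x \<in> S \<Longrightarrow> (fst x - K0) \<union> (snd x - K1) \<subseteq> I \<union> ter ` \<P>"
    "\<And>x y. x \<in> S \<Longrightarrow> y \<in> S \<Longrightarrow> x \<noteq> y \<Longrightarrow>
       ((fst x - K0) \<union> (snd x - K1)) \<inter> ((fst y - K0) \<union> (snd y - K1)) = {}"
proof -
  obtain h0 where h0: "inj_on h0 D0" "h0 ` D0 \<subseteq> \<P>0" using b_path_system_injection[OF P0 D0(2)] .
  obtain h1 where h1: "inj_on h1 D1" "h1 ` D1 \<subseteq> \<P>1" using b_path_system_injection[OF P1 D1(2)] .
  define R0 where "R0 = region \<P>0 h0 K0"
  define R1 where "R1 = region \<P>1 h1 K1"
  note R0 = region_properties[OF P0 D0(1) h0 D0(4), folded R0_def]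
  note R1 = region_properties[OF P1 D1(1) h1 D1(4), folded R1_def]
  obtain S where S: "S \<subseteq> D0 \<times> D1" "|S| =o |K|" "inj_on fst S"
    "(\<Union>x\<in>S. R0 (fst x)) \<inter> (\<Union>x\<in>S. R1 (snd x)) = {}"
    "\<And>x y. x \<in> S \<Longrightarrow> y \<in> S \<Longrightarrow> x \<noteq> y \<Longrightarrow>
       (R0 (fst x) \<union> R1 (snd x)) \<inter> (R0 (fst y) \<union> R1 (snd y)) = {}"
    using exists_disjoint_region_pairs[OF K D0(2) D1(2) R0 R1] by blast
  define U0 where "U0 = (\<Union>x\<in>S. R0 (fst x))"
  define U1 where "U1 = (\<Union>x\<in>S. R1 (snd x))"
  define \<P> where "\<P> = {p\<in>\<P>0. set p \<subseteq> U0} \<union> {p\<in>\<P>1. set p \<subseteq> U1}"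
  have "|S| =o |fst ` S|" using inj_on_imp_bij_betw[OF S(3)] by (rule card_of_ordIsoI)
  then have card: "|fst ` S| =o |K|" using S(2) ordIso_symmetric ordIso_transitive by blast
  have "fst ` S \<subseteq> D0" using S(1) by auto
  then have "inj_on h0 (fst ` S)" "h0 ` fst ` S \<subseteq> \<P>0" using inj_on_subset[OF h0(1)] h0(2) by auto
  moreover have "\<forall>C\<in>fst ` S. set (h0 C) \<subseteq> U0"
    using region_subsets(2)[where h = h0] unfolding U0_def R0_def by blast
  ultimately have "|K| \<le>o |{p\<in>\<P>0. set p \<subseteq> U0}|" by (rule card_le_paths_within[OF _ _ _ card])
  with S(4) have P: "b_path_system E Ind \<I>N BM BN |K| \<P>"
    unfolding \<P>_def U0_def U1_def by (rule b_path_system_restrict_Un[OF K P0 P1])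
  show thesis
  proof (rule that[OF S(1,2) P])
    fix x assume x: "x \<in> S"
    then have "fst x \<in> D0" "snd x \<in> D1" using S(1) by auto
    then have "fst x - K0 \<subseteq> I \<union> ter ` \<P>0" "snd x - K1 \<subseteq> I \<union> ter ` \<P>1" using D0(3) D1(3) by blast+
    moreover have "R0 (fst x) \<subseteq> U0" "R1 (snd x) \<subseteq> U1" unfolding U0_def U1_def using x by blast+
    ultimately have "fst x - K0 \<subseteq> I \<union> ter ` {p\<in>\<P>0. set p \<subseteq> U0}"
      and "snd x - K1 \<subseteq> I \<union> ter ` {p\<in>\<P>1. set p \<subseteq> U1}"
      using petal_covered_within_region unfolding R0_def R1_def by blast+
    then show "(fst x - K0) \<union> (snd x - K1) \<subseteq> I \<union> ter ` \<P>" unfolding \<P>_def by blast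
  next
    fix x y assume "x \<in> S" "y \<in> S" "x \<noteq> y"
    moreover have "(fst z - K0) \<union> (snd z - K1) \<subseteq> R0 (fst z) \<union> R1 (snd z)" for z
      using region_subsets(1)[where C = "fst z" and K = K0 and \<P> = \<P>0 and h = h0]
        region_subsets(1)[where C = "snd z" and K = K1 and \<P> = \<P>1 and h = h1]
      unfolding R0_def R1_def by blast
    ultimately show "((fst x - K0) \<union> (snd x - K1)) \<inter> ((fst y - K0) \<union> (snd y - K1)) = {}"
      using S(5)[of x y] by blast
  qed
qed

lemma elim_popular_popular:
  assumes K: "infinite K" and K0: "popular E Ind \<I>N I BM BN |K| K0"
    and K1: "popular E Ind \<I>N I BM BN |K| K1"
    and e: "e \<in> K0 \<inter> K1" and f: "f \<in> (K0 - K1) \<union> (K1 - K0)"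
  shows "\<exists>G. (G \<in> circuits E Ind \<or> popular E Ind \<I>N I BM BN |K| G) \<and> f \<in> G \<and> G \<subseteq> (K0 \<union> K1) - {e}"
proof -
  obtain \<P>0 D0 where P0: "b_path_system E Ind \<I>N BM BN |K| \<P>0" and D0: "D0 \<subseteq> circuits E Ind"
    "|D0| =o |K|" "\<forall>C\<in>D0. K0 \<subseteq> C" "\<forall>C\<in>D0. C - K0 \<subseteq> I \<union> ter ` \<P>0"
    "\<forall>C\<in>D0. \<forall>C'\<in>D0. C \<noteq> C' \<longrightarrow> (C - K0) \<inter> (C' - K0) = {}" "\<forall>C\<in>D0. (C - K0) \<inter> K1 = {}"
    using popularE[OF K K0 popular_finite[OF K K1]] by metis
  obtain \<P>1 D1 where P1: "b_path_system E Ind \<I>N BM BN |K| \<P>1" and D1: "D1 \<subseteq> circuits E Ind"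
    "|D1| =o |K|" "\<forall>C\<in>D1. K1 \<subseteq> C" "\<forall>C\<in>D1. C - K1 \<subseteq> I \<union> ter ` \<P>1"
    "\<forall>C\<in>D1. \<forall>C'\<in>D1. C \<noteq> C' \<longrightarrow> (C - K1) \<inter> (C' - K1) = {}" "\<forall>C\<in>D1. (C - K1) \<inter> K0 = {}"
    using popularE[OF K K1 popular_finite[OF K K0]] by metis
  obtain S \<P> where S: "S \<subseteq> D0 \<times> D1" "|S| =o |K|" and P: "b_path_system E Ind \<I>N BM BN |K| \<P>"
    and covered: "\<And>x. x \<in> S \<Longrightarrow> (fst x - K0) \<union> (snd x - K1) \<subseteq> I \<union> ter ` \<P>"
    and disjoint: "\<And>x y. x \<in> S \<Longrightarrow> y \<in> S \<Longrightarrow> x \<noteq> y \<Longrightarrow>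
       ((fst x - K0) \<union> (snd x - K1)) \<inter> ((fst y - K0) \<union> (snd y - K1)) = {}"
    using exists_pairs_with_common_path_system[OF K P0 D0(1,2,4,5) P1 D1(1,2,4,5)] by blast
  show ?thesis
  proof (rule circuit_or_popular_of_family[OF K S(2) _ _ P,
        where A = fst and B = snd and W = "\<lambda>x. (fst x - K0) \<union> (snd x - K1)"])
    show "finite (K0 \<union> K1)" using popular_finite[OF K K0] popular_finite[OF K K1] by blast
    show "f \<in> K0 \<union> K1" using f by blast
    fix x assume x: "x \<in> S"
    then have "fst x \<in> D0" "snd x \<in> D1" using S(1) by auto
    then have C0: "fst x \<in> circuits E Ind" "K0 \<subseteq> fst x" "(fst x - K0) \<inter> K1 = {}"
      and C1: "snd x \<in> circuits E Ind" "K1 \<subseteq> snd x" "(snd x - K1) \<inter> K0 = {}"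
      using D0(1,3,6) D1(1,3,6) by auto
    show "fst x \<in> circuits E Ind \<and> snd x \<in> circuits E Ind \<and> e \<in> fst x \<inter> snd x \<and>
        f \<in> (fst x - snd x) \<union> (snd x - fst x) \<and>
        fst x \<union> snd x \<subseteq> (K0 \<union> K1) \<union> ((fst x - K0) \<union> (snd x - K1))"
      using C0 C1 e f by blast
    show "((fst x - K0) \<union> (snd x - K1)) \<inter> (K0 \<union> K1) = {} \<and>
        (fst x - K0) \<union> (snd x - K1) \<subseteq> I \<union> ter ` \<P>"
      using C0(3) C1(3) covered[OF x] by blast
  qed (rule disjoint)
qed

lemma circuit_or_popular_strong_elim:
  assumes K: "infinite K"
    and F0: "F0 \<in> circuits E Ind \<or> popular E Ind \<I>N I BM BN |K| F0"
    and F1: "F1 \<in> circuits E Ind \<or> popular E Ind \<I>N I BM BN |K| F1"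
    and e: "e \<in> F0 \<inter> F1" and f: "f \<in> (F0 - F1) \<union> (F1 - F0)"
  shows "\<exists>G. (G \<in> circuits E Ind \<or> popular E Ind \<I>N I BM BN |K| G) \<and> f \<in> G \<and> G \<subseteq> (F0 \<union> F1) - {e}"
  using F0
proof
  assume C0: "F0 \<in> circuits E Ind"
  show ?thesis using F1
  proof
    assume "F1 \<in> circuits E Ind"
    then show ?thesis using strong_circuit_elim[OF C0 _ e f] by blast
  next
    assume P1: "popular E Ind \<I>N I BM BN |K| F1"
    have "e \<in> F1 \<inter> F0" "f \<in> (F1 - F0) \<union> (F0 - F1)" using e f by blast+
    from elim_popular_circuit[OF K P1 C0 this] show ?thesis by (simp add: Un_commute)
  qed
next
  assume P0: "popular E Ind \<I>N I BM BN |K| F0"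
  show ?thesis using F1
  proof
    assume "F1 \<in> circuits E Ind"
    then show ?thesis by (rule elim_popular_circuit[OF K P0 _ e f])
  next
    assume "popular E Ind \<I>N I BM BN |K| F1"
    then show ?thesis by (rule elim_popular_popular[OF K P0 _ e f])
  qed
qed

end

theorem lemma4p3:
  fixes E :: "'a set" and \<I>M \<I>N :: "'a set set" and I JM JN :: "'a set"
  assumes M: "finitary_matroid E \<I>M"
      and N: "finitary_matroid E \<I>N"
      and I_max: "maximal_in (\<I>M \<inter> \<I>N) I"
      and kappa_regular: "regularCard (mrank (contract \<I>N I))"
      and kappa_uncountable: "(natLeq, mrank (contract \<I>N I)) \<in> ordLess"
      and rank_M: "(mrank (contract \<I>M I), mrank (contract \<I>N I)) \<in> ordLess"
      and JM: "maximal_in (contract \<I>M I) JM"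
      and JN: "maximal_in (contract \<I>N I) JN"
  shows "\<forall>F0 \<in> circuits E \<I>M \<union> {K. popular E \<I>M \<I>N I (I \<union> JM) (I \<union> JN) (mrank (contract \<I>N I)) K}.
         \<forall>F1 \<in> circuits E \<I>M \<union> {K. popular E \<I>M \<I>N I (I \<union> JM) (I \<union> JN) (mrank (contract \<I>N I)) K}.
         \<forall>e \<in> F0 \<inter> F1. \<forall>f \<in> (F0 - F1) \<union> (F1 - F0).
           (\<exists>G \<in> circuits E \<I>M \<union> {K. popular E \<I>M \<I>N I (I \<union> JM) (I \<union> JN) (mrank (contract \<I>N I)) K}.
              f \<in> G \<and> G \<subseteq> (F0 \<union> F1) - {e})"
proof -
  interpret fmatroid E \<I>M by (rule fmatroid.intro[OF M])
  define K where "K = (SOME B. maximal_in (contract \<I>N I) B)"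
  have kappa: "mrank (contract \<I>N I) = |K|" unfolding mrank_def K_def ..
  have "natLeq \<le>o |K|" using kappa_uncountable ordLess_imp_ordLeq unfolding kappa by blast
  then have K: "infinite K" using infinite_iff_natLeq_ordLeq by blast
  show ?thesis
    unfolding kappa Un_iff mem_Collect_eq Bex_def
    using circuit_or_popular_strong_elim[OF K] by blast
qed

end
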